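(* Let $n,p_1,p_2\ge 1$, $p=p_1+p_2$, let $(A_k)_{k\ge 0}$ be a sequence of real $n\times n$ matrices, $C_1\in\mathbb{R}^{p_1\times n}$, $C_2\in\mathbb{R}^{p_2\times n}$, $C=\begin{pmatrix}C_1\\ C_2\end{pmatrix}$, $Q=Q^T>0$ ($n\times n$), and $R=R^T=\begin{pmatrix}R_{11}&R_{12}\\ R_{21}&R_{22}\end{pmatrix}>0$ ($p\times p$, with $R_{11}$ of size $p_1\times p_1$, $R_{22}$ of size $p_2\times p_2$). Fix $\lambda_1,\lambda_2\in[0,1]$. For $X=X^T\ge 0$ define $$g_{\lambda_1\lambda_2}(k,X)=A_kXA_k^T+Q-\lambda_1\lambda_2A_kXC^T(CXC^T+R)^{-1}CXA_k^T-\lambda_1(1-\lambda_2)A_kXC_1^T(C_1XC_1^T+R_{11})^{-1}C_1XA_k^T-(1-\lambda_1)\lambda_2A_kXC_2^T(C_2XC_2^T+R_{22})^{-1}C_2XA_k^T,$$ and for matrices $K\in\mathbb{R}^{n\times p}$, $K_1\in\mathbb{R}^{n\times p_1}$, $K_2\in\mathbb{R}^{n\times p_2}$ define $$\phi(k,K,K_1,K_2,X)=(1-\lambda_1)(1-\lambda_2)(A_kXA_k^T+Q)+\lambda_1\lambda_2\big((A_k+KC)X(A_k+KC)^T+Q+KRK^T\big)$$ $$+\lambda_1(1-\lambda_2)\big((A_k+K_1C_1)X(A_k+K_1C_1)^T+Q+K_1R_{11}K_1^T\big)+(1-\lambda_1)\lambda_2\big((A_k+K_2C_2)X(A_k+K_2C_2)^T+Q+K_2R_{22}K_2^T\big).$$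 Suppose there exist matrices $K_k\in\mathbb{R}^{n\times p}$, $K_{k,1}\in\mathbb{R}^{n\times p_1}$, $K_{k,2}\in\mathbb{R}^{n\times p_2}$ ($k\ge 0$) and a symmetric matrix $\bar P>0$ such that $\bar P>\phi(k,K_k,K_{k,1},K_{k,2},\bar P)$ for all $k\ge 0$. Then for every symmetric $P_0\ge 0$, the sequence defined by $P_{k+1}=g_{\lambda_1\lambda_2}(k,P_k)$ is bounded.
   Context: All matrix inequalities are in the Loewner (positive semidefinite) order: $M>N$ means $M-N$ is positive definite, $M\ge N$ means $M-N$ is positive semidefinite. The recursion $P_{k+1}=g_{\lambda_1\lambda_2}(k,P_k)$ is the covariance recursion of an extended Kalman filter whose two measurement channels (outputs $C_1x$, $C_2x$) deliver measurements with probabilities $\lambda_1,\lambda_2$, with $A_k$ the Jacobian of the dynamics at step $k$. *)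

theory Defs
  imports "HOL-Analysis.Analysis"
begin

definition psd_mat :: "real^'n^'n \<Rightarrow> bool" where
  "psd_mat M \<longleftrightarrow> transpose M = M \<and> (\<forall>x. 0 \<le> x \<bullet> (M *v x))"

definition pd_mat :: "real^'n^'n \<Rightarrow> bool" where
  "pd_mat M \<longleftrightarrow> transpose M = M \<and> (\<forall>x. x \<noteq> 0 \<longrightarrow> 0 < x \<bullet> (M *v x))"

definition stack_rows :: "real^'n^'p1::finite \<Rightarrow> real^'n^'p2::finite \<Rightarrow> real^'n^('p1 + 'p2)" where
  "stack_rows C1 C2 = (\<chi> i. case i of Inl a \<Rightarrow> C1 $ a | Inr b \<Rightarrow> C2 $ b)"

definition blk11 :: "real^('p1::finite + 'p2::finite)^('p1 + 'p2) \<Rightarrow> real^'p1^'p1" where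
  "blk11 R = (\<chi> i j. R $ Inl i $ Inl j)"

definition blk22 :: "real^('p1::finite + 'p2::finite)^('p1 + 'p2) \<Rightarrow> real^'p2^'p2" where
  "blk22 R = (\<chi> i j. R $ Inr i $ Inr j)"

definition gmap ::
  "(nat \<Rightarrow> real^'n^'n) \<Rightarrow> real^'n^'p1 \<Rightarrow> real^'n^'p2 \<Rightarrow> real^'n^'n
   \<Rightarrow> real^('p1 + 'p2)^('p1 + 'p2) \<Rightarrow> real \<Rightarrow> real \<Rightarrow> nat \<Rightarrow> real^'n^'n \<Rightarrow> real^'n^'n" where
  "gmap A C1 C2 Q R l1 l2 k X =
     (let C = stack_rows C1 C2; R11 = blk11 R; R22 = blk22 R; Ak = A k in
      Ak ** X ** transpose Ak + Q
      - (l1 * l2) *\<^sub>R (Ak ** X ** transpose C ** matrix_inv (C ** X ** transpose C + R)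
                         ** C ** X ** transpose Ak)
      - (l1 * (1 - l2)) *\<^sub>R (Ak ** X ** transpose C1 ** matrix_inv (C1 ** X ** transpose C1 + R11)
                         ** C1 ** X ** transpose Ak)
      - ((1 - l1) * l2) *\<^sub>R (Ak ** X ** transpose C2 ** matrix_inv (C2 ** X ** transpose C2 + R22)
                         ** C2 ** X ** transpose Ak))"

definition phimap ::
  "(nat \<Rightarrow> real^'n^'n) \<Rightarrow> real^'n^'p1 \<Rightarrow> real^'n^'p2 \<Rightarrow> real^'n^'n
   \<Rightarrow> real^('p1 + 'p2)^('p1 + 'p2) \<Rightarrow> real \<Rightarrow> real \<Rightarrow> nat
   \<Rightarrow> real^('p1 + 'p2)^'n \<Rightarrow> real^'p1^'n \<Rightarrow> real^'p2^'n \<Rightarrow> real^'n^'n \<Rightarrow> real^'n^'n" where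
  "phimap A C1 C2 Q R l1 l2 k K K1 K2 X =
     (let C = stack_rows C1 C2; R11 = blk11 R; R22 = blk22 R; Ak = A k in
      ((1 - l1) * (1 - l2)) *\<^sub>R (Ak ** X ** transpose Ak + Q)
      + (l1 * l2) *\<^sub>R ((Ak + K ** C) ** X ** transpose (Ak + K ** C) + Q + K ** R ** transpose K)
      + (l1 * (1 - l2)) *\<^sub>R ((Ak + K1 ** C1) ** X ** transpose (Ak + K1 ** C1) + Q
                                + K1 ** R11 ** transpose K1)
      + ((1 - l1) * l2) *\<^sub>R ((Ak + K2 ** C2) ** X ** transpose (Ak + K2 ** C2) + Q
                                + K2 ** R22 ** transpose K2))"

end

theory Submission
  imports Defs
begin

(*
  For each measurement channel, completing the square in the gain shows that the Kalman update
  A X A^T - A X C^T (C X C^T + R)^-1 C X A^T is positive semidefinite and lies below the Joseph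
  form (A + K C) X (A + K C)^T + K R K^T for every gain K.  Since g and phi are the same convex
  combination of these channel terms (plus Q), g(k, X) <= phi(k, K, K1, K2, X) for all gains.
  Moreover phi is monotone in X and, its constant part being positive semidefinite,
  phi(M X) <= M phi(X) for M >= 1.  Choosing M >= 1 with P0 <= M Pbar, induction gives
  P_(k+1) <= phi(k, K_k, K_k1, K_k2, P_k) <= M phi(k, K_k, K_k1, K_k2, Pbar) <= M Pbar, and the
  positive semidefinite matrices below M Pbar form a bounded set.
*)

definition quad_form :: "real^'n^'n \<Rightarrow> real^'n \<Rightarrow> real" where
  "quad_form M x = x \<bullet> (M *v x)"

definition loewner_le :: "real^'n^'n \<Rightarrow> real^'n^'n \<Rightarrow> bool"  (infix \<open>\<preceq>\<close> 50) where
  "X \<preceq> Y \<longleftrightarrow> (\<forall>x. quad_form X x \<le> quad_form Y x)"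

lemma transpose_add: "transpose (A + B) = transpose A + transpose (B::'a::semiring_1^'n^'m)"
  by (simp add: transpose_def vec_eq_iff)

lemma transpose_diff: "transpose (A - B) = transpose A - transpose (B::'a::ring_1^'n^'m)"
  by (simp add: transpose_def vec_eq_iff)

lemma inner_matrix_vector_transpose: "x \<bullet> ((M::real^'n^'m) *v y) = (transpose M *v x) \<bullet> y"
  by (metis dot_lmul_matrix transpose_matrix_vector)

lemma quad_form_add: "quad_form (A + B) x = quad_form A x + quad_form B x"
  by (simp add: quad_form_def matrix_vector_mult_add_rdistrib inner_add_right)

lemma quad_form_diff: "quad_form (A - B) x = quad_form A x - quad_form B x"
  by (simp add: quad_form_def matrix_vector_mult_diff_rdistrib inner_diff_right)

lemma quad_form_scaleR: "quad_form (c *\<^sub>R A) x = c * quad_form A x"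
  by (simp add: quad_form_def flip: scaleR_matrix_vector_assoc)

lemma quad_form_congruence: "quad_form (M ** X ** transpose M) x = quad_form X (transpose M *v x)"
  unfolding quad_form_def by (simp add: inner_matrix_vector_transpose flip: matrix_vector_mul_assoc)

lemma psd_mat_iff_quad_form: "psd_mat X \<longleftrightarrow> transpose X = X \<and> (\<forall>x. 0 \<le> quad_form X x)"
  unfolding psd_mat_def quad_form_def ..

lemma psd_mat_quad_form_nonneg: "psd_mat X \<Longrightarrow> 0 \<le> quad_form X x"
  unfolding psd_mat_iff_quad_form by blast

lemma pd_imp_psd_mat: "pd_mat X \<Longrightarrow> psd_mat X"
  unfolding pd_mat_def psd_mat_def by (metis inner_zero_left order.strict_implies_order order_refl)

lemma psd_mat_add: "psd_mat X \<Longrightarrow> psd_mat Y \<Longrightarrow> psd_mat (X + Y)"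
  by (simp add: psd_mat_iff_quad_form transpose_add quad_form_add)

lemma psd_mat_scaleR: "psd_mat X \<Longrightarrow> 0 \<le> c \<Longrightarrow> psd_mat (c *\<^sub>R X)"
  by (simp add: psd_mat_iff_quad_form transpose_scalar quad_form_scaleR)

lemma psd_add_pd_mat: "psd_mat X \<Longrightarrow> pd_mat Y \<Longrightarrow> pd_mat (X + Y)"
  unfolding pd_mat_def psd_mat_def
  by (simp add: transpose_add matrix_vector_mult_add_rdistrib inner_add_right add_nonneg_pos)

lemma psd_mat_congruence:
  fixes M :: "real^'n^'m"
  shows "psd_mat X \<Longrightarrow> psd_mat (M ** X ** transpose M)"
  by (simp add: psd_mat_iff_quad_form quad_form_congruence matrix_transpose_mul matrix_mul_assoc)

lemma pd_mat_congruence: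
  fixes M :: "real^'n^'m"
  assumes "pd_mat X" and "\<And>x. transpose M *v x = 0 \<Longrightarrow> x = 0"
  shows "pd_mat (M ** X ** transpose M)"
  using assms unfolding pd_mat_def
  by (fastforce simp: quad_form_congruence matrix_transpose_mul matrix_mul_assoc simp flip: quad_form_def)

lemma pd_mat_matrix_inv:
  fixes S :: "real^'n^'n"
  assumes "pd_mat S"
  shows "S ** matrix_inv S = mat 1" and "transpose (matrix_inv S) = matrix_inv S"
proof -
  have "\<forall>x. S *v x = 0 \<longrightarrow> x = 0"
    using assms unfolding pd_mat_def by (metis inner_zero_right less_irrefl)
  then have "invertible S"
    using matrix_left_invertible_ker invertible_left_inverse by blast
  then have inv: "S ** matrix_inv S = mat 1 \<and> matrix_inv S ** S = mat 1"
    unfolding invertible_def matrix_inv_def by (rule someI_ex)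
  then show "S ** matrix_inv S = mat 1" by simp
  have left_inv: "transpose (matrix_inv S) ** S = mat 1"
    using inv assms unfolding pd_mat_def by (metis matrix_transpose_mul transpose_mat)
  have "transpose (matrix_inv S) = transpose (matrix_inv S) ** (S ** matrix_inv S)"
    using inv by simp
  also have "\<dots> = matrix_inv S"
    using left_inv by (simp add: matrix_mul_assoc)
  finally show "transpose (matrix_inv S) = matrix_inv S" .
qed

lemma loewner_le_refl: "X \<preceq> X"
  by (simp add: loewner_le_def)

lemma loewner_le_trans [trans]: "X \<preceq> Y \<Longrightarrow> Y \<preceq> Z \<Longrightarrow> X \<preceq> Z"
  unfolding loewner_le_def by (meson order_trans)

lemma loewner_le_add: "X \<preceq> Y \<Longrightarrow> X' \<preceq> Y' \<Longrightarrow> X + X' \<preceq> Y + Y'"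
  unfolding loewner_le_def quad_form_add by (meson add_mono)

lemma loewner_le_scaleR: "X \<preceq> Y \<Longrightarrow> 0 \<le> c \<Longrightarrow> c *\<^sub>R X \<preceq> c *\<^sub>R Y"
  unfolding loewner_le_def quad_form_scaleR by (simp add: mult_left_mono)

lemma loewner_le_scaleR_self: "psd_mat X \<Longrightarrow> 1 \<le> M \<Longrightarrow> X \<preceq> M *\<^sub>R X"
  unfolding loewner_le_def quad_form_scaleR
  by (metis mult_le_cancel_right1 not_less psd_mat_quad_form_nonneg)

lemma loewner_le_if_pd_mat_diff: "pd_mat (Y - X) \<Longrightarrow> X \<preceq> Y"
  unfolding loewner_le_def
  using psd_mat_quad_form_nonneg[OF pd_imp_psd_mat] by (fastforce simp: quad_form_diff)

definition selection_mat :: "('q::finite \<Rightarrow> 'p::finite) \<Rightarrow> real^'p^'q" where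
  "selection_mat f = (\<chi> a i. if f a = i then 1 else 0)"

lemma principal_submatrix_eq:
  "(\<chi> a b. R $ f a $ f b) = selection_mat f ** R ** transpose (selection_mat f)"
  by (simp add: vec_eq_iff selection_mat_def matrix_matrix_mult_def transpose_def
      mult.commute[of "if _ then _ else _"] if_distrib[of "(*) _"] cong: if_cong)

lemma transpose_selection_mat_mult_apply:
  assumes "inj f"
  shows "(transpose (selection_mat f) *v x) $ f b = x $ b"
  using assms by (simp add: selection_mat_def matrix_vector_mult_def transpose_def inj_eq
      if_distrib[of "\<lambda>c. c * _"] cong: if_cong)

lemma psd_mat_principal_submatrix: "psd_mat R \<Longrightarrow> psd_mat (\<chi> a b. R $ f a $ f b)"
  unfolding principal_submatrix_eq by (rule psd_mat_congruence)

lemma pd_mat_principal_submatrix: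
  assumes "pd_mat R" and "inj f"
  shows "pd_mat (\<chi> a b. R $ f a $ f b)"
  unfolding principal_submatrix_eq
proof (rule pd_mat_congruence[OF assms(1)])
  show "x = 0" if "transpose (selection_mat f) *v x = 0" for x
    using transpose_selection_mat_mult_apply[OF assms(2), of x] that by (simp add: vec_eq_iff)
qed

lemma psd_mat_blk11: "psd_mat R \<Longrightarrow> psd_mat (blk11 R)"
  and psd_mat_blk22: "psd_mat R \<Longrightarrow> psd_mat (blk22 R)"
  unfolding blk11_def blk22_def by (simp_all add: psd_mat_principal_submatrix)

lemma pd_mat_blk11: "pd_mat R \<Longrightarrow> pd_mat (blk11 R)"
  and pd_mat_blk22: "pd_mat R \<Longrightarrow> pd_mat (blk22 R)"
  unfolding blk11_def blk22_def by (simp_all add: pd_mat_principal_submatrix)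

definition kalman_update :: "real^'n^'m \<Rightarrow> real^'n^'p \<Rightarrow> real^'p^'p \<Rightarrow> real^'n^'n \<Rightarrow> real^'m^'m" where
  "kalman_update A C R X = A ** X ** transpose A
     - A ** X ** transpose C ** matrix_inv (C ** X ** transpose C + R) ** C ** X ** transpose A"

definition joseph_form ::
  "real^'n^'m \<Rightarrow> real^'n^'p \<Rightarrow> real^'p^'p \<Rightarrow> real^'p^'m \<Rightarrow> real^'n^'n \<Rightarrow> real^'m^'m" where
  "joseph_form A C R K X = (A + K ** C) ** X ** transpose (A + K ** C) + K ** R ** transpose K"

lemma completion_of_squares:
  fixes C :: "real^'n^'p" and y :: "real^'n"
  assumes X: "transpose X = X" and S: "pd_mat S"
  defines "w \<equiv> C *v (X *v y)"
  shows "quad_form X (y + transpose C *v u) + quad_form (S - C ** X ** transpose C) u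
       = quad_form X y - quad_form (matrix_inv S) w + quad_form S (u + matrix_inv S *v w)"
proof -
  have ST: "transpose S = S" using S by (simp add: pd_mat_def)
  have Xyu: "(transpose C *v u) \<bullet> (X *v y) = u \<bullet> w"
    unfolding w_def by (simp add: inner_matrix_vector_transpose)
  have Xuy: "y \<bullet> (X *v (transpose C *v u)) = u \<bullet> w"
    by (metis Xyu X inner_matrix_vector_transpose inner_commute)
  have Sw: "S *v (matrix_inv S *v w) = w"
    by (simp add: matrix_vector_mul_assoc pd_mat_matrix_inv[OF S])
  have Swu: "(matrix_inv S *v w) \<bullet> (S *v u) = u \<bullet> w"
    by (metis Sw ST inner_matrix_vector_transpose inner_commute)
  have "quad_form X (y + transpose C *v u)
      = quad_form X y + 2 * (u \<bullet> w) + quad_form X (transpose C *v u)"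
    unfolding quad_form_def
    by (simp only: matrix_vector_right_distrib inner_add_left inner_add_right Xyu Xuy)
  moreover have "quad_form S (u + matrix_inv S *v w)
      = quad_form S u + 2 * (u \<bullet> w) + quad_form (matrix_inv S) w"
    unfolding quad_form_def
    by (simp only: matrix_vector_right_distrib inner_add_left inner_add_right Sw Swu)
      (simp add: inner_commute)
  ultimately show ?thesis
    by (simp add: quad_form_diff quad_form_congruence)
qed

lemma quad_form_kalman_update:
  assumes "transpose X = X"
  shows "quad_form (kalman_update A C R X) x = quad_form X (transpose A *v x)
     - quad_form (matrix_inv (C ** X ** transpose C + R)) (C *v (X *v (transpose A *v x)))"
proof -
  let ?G = "A ** X ** transpose C"
  have "A ** X ** transpose C ** matrix_inv (C ** X ** transpose C + R) ** C ** X ** transpose A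
      = ?G ** matrix_inv (C ** X ** transpose C + R) ** transpose ?G"
    using assms by (simp add: matrix_transpose_mul matrix_mul_assoc)
  moreover have "transpose ?G *v x = C *v (X *v (transpose A *v x))"
    using assms by (simp add: matrix_transpose_mul matrix_vector_mul_assoc del: transpose_matrix_vector)
  ultimately show ?thesis
    unfolding kalman_update_def by (simp add: quad_form_diff quad_form_congruence)
qed

lemma quad_form_joseph_form:
  "quad_form (joseph_form A C R K X) x
     = quad_form X (transpose A *v x + transpose C *v (transpose K *v x)) + quad_form R (transpose K *v x)"
  unfolding joseph_form_def quad_form_add quad_form_congruence
  by (simp add: transpose_add matrix_transpose_mul matrix_vector_mult_add_rdistrib
      matrix_vector_mul_assoc del: transpose_matrix_vector)

lemma kalman_update_le_joseph_form:
  assumes X: "psd_mat X" and R: "pd_mat R"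
  shows "kalman_update A C R X \<preceq> joseph_form A C R K X"
  unfolding loewner_le_def
proof
  fix x
  let ?S = "C ** X ** transpose C + R"
  have XT: "transpose X = X" using X by (simp add: psd_mat_def)
  have S: "pd_mat ?S" using psd_add_pd_mat[OF psd_mat_congruence[OF X] R] .
  have "quad_form (joseph_form A C R K X) x
      = quad_form (kalman_update A C R X) x
        + quad_form ?S (transpose K *v x + matrix_inv ?S *v (C *v (X *v (transpose A *v x))))"
    using completion_of_squares[OF XT S, where C = C and y = "transpose A *v x" and u = "transpose K *v x"]
    by (simp add: quad_form_joseph_form quad_form_kalman_update[OF XT])
  then show "quad_form (kalman_update A C R X) x \<le> quad_form (joseph_form A C R K X) x"
    using psd_mat_quad_form_nonneg[OF pd_imp_psd_mat[OF S]] by simp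
qed

lemma kalman_update_psd:
  assumes X: "psd_mat X" and R: "pd_mat R"
  shows "psd_mat (kalman_update A C R X)"
  unfolding psd_mat_iff_quad_form
proof (intro conjI allI)
  let ?S = "C ** X ** transpose C + R"
  have XT: "transpose X = X" using X by (simp add: psd_mat_def)
  have S: "pd_mat ?S" using psd_add_pd_mat[OF psd_mat_congruence[OF X] R] .
  show "transpose (kalman_update A C R X) = kalman_update A C R X"
    unfolding kalman_update_def using XT pd_mat_matrix_inv(2)[OF S]
    by (simp add: transpose_diff matrix_transpose_mul matrix_mul_assoc)
  fix x
  let ?u = "- (matrix_inv ?S *v (C *v (X *v (transpose A *v x))))"
  have "quad_form (kalman_update A C R X) x
      = quad_form X (transpose A *v x + transpose C *v ?u) + quad_form R ?u"
    using completion_of_squares[OF XT S, where C = C and y = "transpose A *v x" and u = ?u]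
    by (simp add: quad_form_kalman_update[OF XT] quad_form_def[of ?S])
  then show "0 \<le> quad_form (kalman_update A C R X) x"
    using psd_mat_quad_form_nonneg[OF X] psd_mat_quad_form_nonneg[OF pd_imp_psd_mat[OF R]]
    by (metis add_nonneg_nonneg)
qed

lemma joseph_form_mono: "X \<preceq> Y \<Longrightarrow> joseph_form A C R K X \<preceq> joseph_form A C R K Y"
  unfolding loewner_le_def quad_form_joseph_form by simp

lemma joseph_form_scaleR_le:
  assumes "psd_mat R" "1 \<le> M"
  shows "joseph_form A C R K (M *\<^sub>R X) \<preceq> M *\<^sub>R joseph_form A C R K X"
  unfolding loewner_le_def quad_form_joseph_form quad_form_scaleR
  using psd_mat_quad_form_nonneg[OF assms(1)] assms(2)
  by (simp add: algebra_simps mult_le_cancel_right1) (meson not_less)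

lemma gmap_as_kalman_updates:
  "gmap A C1 C2 Q R l1 l2 k X = Q + ((1 - l1) * (1 - l2)) *\<^sub>R (A k ** X ** transpose (A k))
     + (l1 * l2) *\<^sub>R kalman_update (A k) (stack_rows C1 C2) R X
     + (l1 * (1 - l2)) *\<^sub>R kalman_update (A k) C1 (blk11 R) X
     + ((1 - l1) * l2) *\<^sub>R kalman_update (A k) C2 (blk22 R) X"
  unfolding gmap_def kalman_update_def Let_def by (simp add: algebra_simps)

lemma phimap_as_joseph_forms:
  "phimap A C1 C2 Q R l1 l2 k K K1 K2 X = Q + ((1 - l1) * (1 - l2)) *\<^sub>R (A k ** X ** transpose (A k))
     + (l1 * l2) *\<^sub>R joseph_form (A k) (stack_rows C1 C2) R K X
     + (l1 * (1 - l2)) *\<^sub>R joseph_form (A k) C1 (blk11 R) K1 X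
     + ((1 - l1) * l2) *\<^sub>R joseph_form (A k) C2 (blk22 R) K2 X"
  unfolding phimap_def joseph_form_def Let_def by (simp add: algebra_simps)

lemma gmap_psd:
  assumes "psd_mat Q" "pd_mat R" "0 \<le> l1" "l1 \<le> 1" "0 \<le> l2" "l2 \<le> 1" "psd_mat X"
  shows "psd_mat (gmap A C1 C2 Q R l1 l2 k X)"
  unfolding gmap_as_kalman_updates using assms
  by (intro psd_mat_add psd_mat_scaleR psd_mat_congruence kalman_update_psd pd_mat_blk11 pd_mat_blk22)
    simp_all

lemma gmap_le_phimap:
  assumes "pd_mat R" "0 \<le> l1" "l1 \<le> 1" "0 \<le> l2" "l2 \<le> 1" "psd_mat X"
  shows "gmap A C1 C2 Q R l1 l2 k X \<preceq> phimap A C1 C2 Q R l1 l2 k K K1 K2 X"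
  unfolding gmap_as_kalman_updates phimap_as_joseph_forms using assms
  by (intro loewner_le_add loewner_le_refl loewner_le_scaleR kalman_update_le_joseph_form
      pd_mat_blk11 pd_mat_blk22) simp_all

lemma phimap_mono:
  assumes "0 \<le> l1" "l1 \<le> 1" "0 \<le> l2" "l2 \<le> 1" "X \<preceq> Y"
  shows "phimap A C1 C2 Q R l1 l2 k K K1 K2 X \<preceq> phimap A C1 C2 Q R l1 l2 k K K1 K2 Y"
  unfolding phimap_as_joseph_forms using assms
  by (intro loewner_le_add loewner_le_refl loewner_le_scaleR joseph_form_mono)
    (simp_all add: loewner_le_def quad_form_congruence)

lemma phimap_scaleR_le:
  assumes "psd_mat Q" "psd_mat R" "0 \<le> l1" "l1 \<le> 1" "0 \<le> l2" "l2 \<le> 1" "1 \<le> M"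
  shows "phimap A C1 C2 Q R l1 l2 k K K1 K2 (M *\<^sub>R X) \<preceq> M *\<^sub>R phimap A C1 C2 Q R l1 l2 k K K1 K2 X"
proof -
  have scaled: "M *\<^sub>R phimap A C1 C2 Q R l1 l2 k K K1 K2 X
      = M *\<^sub>R Q + ((1 - l1) * (1 - l2)) *\<^sub>R (M *\<^sub>R (A k ** X ** transpose (A k)))
        + (l1 * l2) *\<^sub>R (M *\<^sub>R joseph_form (A k) (stack_rows C1 C2) R K X)
        + (l1 * (1 - l2)) *\<^sub>R (M *\<^sub>R joseph_form (A k) C1 (blk11 R) K1 X)
        + ((1 - l1) * l2) *\<^sub>R (M *\<^sub>R joseph_form (A k) C2 (blk22 R) K2 X)"
    by (simp add: phimap_as_joseph_forms algebra_simps)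
  show ?thesis
    unfolding scaled phimap_as_joseph_forms[where X = "M *\<^sub>R X"] using assms
    by (intro loewner_le_add loewner_le_scaleR loewner_le_scaleR_self joseph_form_scaleR_le
        psd_mat_blk11 psd_mat_blk22)
      (simp_all add: loewner_le_def quad_form_congruence quad_form_scaleR)
qed

lemma abs_inner_le_quad_form_polarization:
  assumes "psd_mat X"
  shows "\<bar>u \<bullet> (X *v v)\<bar> \<le> (quad_form X (u + v) + quad_form X (u - v)) / 4"
proof -
  have sym: "v \<bullet> (X *v u) = u \<bullet> (X *v v)"
    using assms by (metis inner_commute inner_matrix_vector_transpose psd_mat_def)
  have "quad_form X (u + v) = quad_form X u + 2 * (u \<bullet> (X *v v)) + quad_form X v"
    unfolding quad_form_def using sym
    by (simp add: matrix_vector_right_distrib inner_add_left inner_add_right)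
  moreover have "quad_form X (u - v) = quad_form X u - 2 * (u \<bullet> (X *v v)) + quad_form X v"
    unfolding quad_form_def using sym
    by (simp add: matrix_vector_mult_diff_distrib inner_diff_left inner_diff_right)
  ultimately show ?thesis
    using psd_mat_quad_form_nonneg[OF assms, of "u + v"] psd_mat_quad_form_nonneg[OF assms, of "u - v"]
    by (simp add: abs_le_iff)
qed

lemma bounded_psd_loewner_le:
  fixes Y :: "real^'n^'n"
  shows "bounded {X. psd_mat X \<and> X \<preceq> Y}"
proof -
  define b where "b i j = (quad_form Y (axis i 1 + axis j 1) + quad_form Y (axis i 1 - axis j 1)) / 4"
    for i j
  have entry: "\<bar>X $ i $ j\<bar> \<le> b i j" if "psd_mat X" "X \<preceq> Y" for X i j
  proof -
    have "axis i 1 \<bullet> (X *v axis j 1) = (X *v axis j 1) $ i"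
      by (simp add: cart_eq_inner_axis inner_commute)
    then have "X $ i $ j = axis i 1 \<bullet> (X *v axis j 1)"
      by (simp add: matrix_vector_mult_basis column_def)
    then have "\<bar>X $ i $ j\<bar> \<le> (quad_form X (axis i 1 + axis j 1) + quad_form X (axis i 1 - axis j 1)) / 4"
      using abs_inner_le_quad_form_polarization[OF that(1)] by simp
    also have "\<dots> \<le> b i j"
      using that(2) unfolding b_def loewner_le_def by (simp add: add_mono)
    finally show ?thesis .
  qed
  have "norm X \<le> (\<Sum>i\<in>UNIV. \<Sum>j\<in>UNIV. b i j)" if "psd_mat X" "X \<preceq> Y" for X
  proof -
    have "norm X \<le> (\<Sum>i\<in>UNIV. norm (X $ i))"
      unfolding norm_vec_def by (rule L2_set_le_sum) simp
    also have "\<dots> \<le> (\<Sum>i\<in>UNIV. \<Sum>j\<in>UNIV. \<bar>X $ i $ j\<bar>)"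
      by (intro sum_mono norm_le_l1_cart)
    also have "\<dots> \<le> (\<Sum>i\<in>UNIV. \<Sum>j\<in>UNIV. b i j)"
      by (intro sum_mono entry that)
    finally show ?thesis .
  qed
  then show ?thesis
    unfolding bounded_iff by blast
qed

lemma pd_mat_quad_form_lower_bound:
  assumes "pd_mat Y"
  obtains m where "m > 0" "\<And>x. m * (norm x)\<^sup>2 \<le> quad_form Y x"
proof -
  have "continuous_on (sphere 0 1) (quad_form Y)"
    unfolding quad_form_def by (intro continuous_intros)
  moreover have "sphere (0::real^'n) 1 \<noteq> {}"
    by simp
  ultimately obtain x0 where x0: "x0 \<in> sphere 0 1"
    and min: "\<And>u. u \<in> sphere 0 1 \<Longrightarrow> quad_form Y x0 \<le> quad_form Y u"
    using continuous_attains_inf[OF compact_sphere] by blast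
  have "x0 \<noteq> 0"
    using x0 by auto
  then have "0 < quad_form Y x0"
    using assms unfolding pd_mat_def quad_form_def by blast
  moreover have "quad_form Y x0 * (norm x)\<^sup>2 \<le> quad_form Y x" for x
  proof (cases "x = 0")
    case True
    then show ?thesis by (simp add: quad_form_def)
  next
    case False
    define u where "u = (1 / norm x) *\<^sub>R x"
    have "u \<in> sphere 0 1"
      using False by (simp add: u_def)
    moreover have "quad_form Y x = (norm x)\<^sup>2 * quad_form Y u"
      using False by (simp add: u_def quad_form_def power2_eq_square matrix_vector_mult_scaleR)
    ultimately show ?thesis
      using min by (metis mult.commute mult_right_mono zero_le_power2)
  qed
  ultimately show ?thesis
    using that by blast
qed

lemma quad_form_upper_bound:
  obtains B where "B > 0" "\<And>x. quad_form X x \<le> B * (norm x)\<^sup>2"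
proof -
  obtain B where B: "B > 0" "\<And>x. norm (X *v x) \<le> norm x * B"
    using bounded_linear.pos_bounded[OF matrix_vector_mul_bounded_linear[of X]] by blast
  have "quad_form X x \<le> B * (norm x)\<^sup>2" for x
  proof -
    have "quad_form X x \<le> norm x * norm (X *v x)"
      unfolding quad_form_def by (rule norm_cauchy_schwarz)
    also have "\<dots> \<le> norm x * (norm x * B)"
      using B by (simp add: mult_left_mono)
    finally show ?thesis
      by (simp add: power2_eq_square algebra_simps)
  qed
  then show ?thesis
    using B that by blast
qed

lemma pd_mat_dominates:
  assumes "pd_mat Y"
  obtains M where "1 \<le> M" "X \<preceq> M *\<^sub>R Y"
proof -
  obtain m where m: "m > 0" "\<And>x. m * (norm x)\<^sup>2 \<le> quad_form Y x"
    using pd_mat_quad_form_lower_bound[OF assms] by blast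
  obtain B where B: "B > 0" "\<And>x. quad_form X x \<le> B * (norm x)\<^sup>2"
    using quad_form_upper_bound by blast
  define M where "M = max 1 (B / m)"
  have "quad_form X x \<le> M * quad_form Y x" for x
  proof -
    have "quad_form X x \<le> (B / m) * (m * (norm x)\<^sup>2)"
      using B(2)[of x] m(1) by simp
    also have "\<dots> \<le> M * quad_form Y x"
      using m B(1) by (intro mult_mono) (auto simp: M_def)
    finally show ?thesis .
  qed
  then show ?thesis
    using that[of M] by (simp add: M_def loewner_le_def quad_form_scaleR)
qed

theorem lemma2:
  fixes A :: "nat \<Rightarrow> real^'n^'n"
    and C1 :: "real^'n^'p1" and C2 :: "real^'n^'p2"
    and Q :: "real^'n^'n" and R :: "real^('p1 + 'p2)^('p1 + 'p2)"
    and l1 l2 :: real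
    and Kk :: "nat \<Rightarrow> real^('p1 + 'p2)^'n"
    and Kk1 :: "nat \<Rightarrow> real^'p1^'n" and Kk2 :: "nat \<Rightarrow> real^'p2^'n"
    and Pbar P0 :: "real^'n^'n"
    and P :: "nat \<Rightarrow> real^'n^'n"
  assumes "pd_mat Q" and "pd_mat R"
    and "0 \<le> l1" "l1 \<le> 1" "0 \<le> l2" "l2 \<le> 1"
    and "pd_mat Pbar"
    and "\<And>k. pd_mat (Pbar - phimap A C1 C2 Q R l1 l2 k (Kk k) (Kk1 k) (Kk2 k) Pbar)"
    and "psd_mat P0"
    and "P 0 = P0"
    and "\<And>k. P (Suc k) = gmap A C1 C2 Q R l1 l2 k (P k)"
  shows "bounded (range P)"
proof -
  note Q = pd_imp_psd_mat[OF assms(1)] and R = assms(2) and weights = assms(3-6)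
  let ?\<phi> = "\<lambda>k X. phimap A C1 C2 Q R l1 l2 k (Kk k) (Kk1 k) (Kk2 k) X"
  obtain M where M: "1 \<le> M" "P0 \<preceq> M *\<^sub>R Pbar"
    using pd_mat_dominates[OF assms(7)] by blast
  have "psd_mat (P k) \<and> P k \<preceq> M *\<^sub>R Pbar" for k
  proof (induction k)
    case 0
    show ?case using assms(9,10) M by simp
  next
    case (Suc k)
    then have "P (Suc k) \<preceq> ?\<phi> k (P k)"
      unfolding assms(11) using gmap_le_phimap[OF R weights] by blast
    also have "\<dots> \<preceq> ?\<phi> k (M *\<^sub>R Pbar)"
      using phimap_mono[OF weights] Suc by blast
    also have "\<dots> \<preceq> M *\<^sub>R ?\<phi> k Pbar"
      using phimap_scaleR_le[OF Q pd_imp_psd_mat[OF R] weights M(1)] .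
    also have "\<dots> \<preceq> M *\<^sub>R Pbar"
      using loewner_le_scaleR[OF loewner_le_if_pd_mat_diff[OF assms(8)]] M(1) by simp
    finally show ?case
      using gmap_psd[OF Q R weights] Suc assms(11) by simp
  qed
  then have "range P \<subseteq> {X. psd_mat X \<and> X \<preceq> M *\<^sub>R Pbar}"
    by blast
  then show ?thesis
    using bounded_psd_loewner_le bounded_subset by blast
qed

end
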